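(* Let $(X_n)_{n\ge0}$ be a real-valued process adapted to a filtration $(\mathcal F_n)$ with $\limsup_{n\to\infty}|X_n|=\infty$ a.s. Let $f:\mathbb R\to\mathbb R_+$ satisfy $\sup_x f(x)<\infty$, $\lim_{x\to+\infty}f(x)=0$, and $\inf_{y\le x}f(y)>0$ for every $x\in\mathbb R_+$. Suppose there exists $x_1\in\mathbb R_+$ such that for all $n\ge0$, $$\mathbb E[f(X_{n+1})-f(X_n)\mid\mathcal F_n]\le0\ \text{on }\{X_n>x_1\},\qquad \mathbb E[f(-X_{n+1})-f(-X_n)\mid\mathcal F_n]\le0\ \text{on }\{X_n<-x_1\}.$$ Then $\lim_{n\to\infty}X_n\in\{-\infty,+\infty\}$ a.s. *)

theory Defs
  imports "HOL-Probability.Probability"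
begin

end

theory Submission
  imports Defs
begin

(*
  Let f \<ge> \<delta> > 0 on (-\<infinity>, K] with K \<ge> x1, and f \<le> \<epsilon> on (b, \<infinity>) for some b > K.
  Between the first time X exceeds b and its first return to (-\<infinity>, K], X stays above x1,
  so f (X n) is a supermartingale on that stretch; it starts at most \<epsilon> and ends at least \<delta>
  if the return happens, so the return has probability at most \<epsilon> / \<delta>. Letting \<epsilon> \<rightarrow> 0,
  almost every path that is unbounded above eventually stays above every K, i.e. tends
  to +\<infinity>. The same argument for -X handles paths unbounded below, and limsup |X n| = \<infinity>
  says that every path is one of the two.
*)

lemma (in finite_measure) integrable_bounded:
  fixes g :: "'a \<Rightarrow> real"
  shows "g \<in> borel_measurable M \<Longrightarrow> (\<And>\<omega>. \<bar>g \<omega>\<bar> \<le> C) \<Longrightarrow> integrable M g"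
  by (rule integrable_const_bound[where B = C]) auto

lemma (in finite_measure) INT_in_null_sets:
  assumes sets: "\<And>m. A m \<in> sets M" and le: "\<And>m. measure M (A m) \<le> e m" and e: "e \<longlonglongrightarrow> 0"
  shows "(\<Inter>m. A m) \<in> null_sets M"
proof -
  have "measure M (\<Inter>m. A m) \<le> e m" for m
    using finite_measure_mono[of "\<Inter>m. A m" "A m"] le[of m] sets by fastforce
  then have "measure M (\<Inter>m. A m) \<le> 0"
    by (intro LIMSEQ_le_const[OF e]) auto
  then have "measure M (\<Inter>m. A m) = 0"
    by (simp add: antisym)
  moreover have "(\<Inter>m. A m) \<in> sets M"
    using sets by auto
  ultimately show ?thesis
    by (intro null_setsI) (auto simp: emeasure_eq_measure)
qed

lemma unbounded_if_limsup_abs_infinite: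
  fixes x :: "nat \<Rightarrow> real"
  assumes "limsup (\<lambda>n. ereal \<bar>x n\<bar>) = \<infinity>"
  shows "\<not> bdd_above (range x) \<or> \<not> bdd_below (range x)"
proof (rule ccontr)
  assume "\<not> ?thesis"
  then obtain a c where "\<And>n. x n \<le> a" "\<And>n. c \<le> x n"
    by (auto simp: bdd_above_def bdd_below_def)
  then obtain C where "\<And>n. \<bar>x n\<bar> \<le> C"
    by (intro that[of "max a (- c)"]) (auto simp: abs_le_iff intro: max.coboundedI1 max.coboundedI2)
  then have "limsup (\<lambda>n. ereal \<bar>x n\<bar>) \<le> ereal C"
    by (intro Limsup_bounded) auto
  then show False using assms by simp
qed

locale adapted_real_process = prob_space M for M :: "'a measure" +
  fixes F :: "nat \<Rightarrow> 'a measure" and X :: "nat \<Rightarrow> 'a \<Rightarrow> real"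
  assumes subalg: "\<And>n. subalgebra M (F n)"
    and filt_mono: "\<And>n m. n \<le> m \<Longrightarrow> sets (F n) \<subseteq> sets (F m)"
    and adapted: "\<And>n. X n \<in> borel_measurable (F n)"
begin

lemma space_F: "space (F n) = space M"
  using subalg by (simp add: subalgebra_def)

lemma sets_F_subset: "sets (F n) \<subseteq> sets M"
  using subalg by (simp add: subalgebra_def)

lemma adapted_le: "j \<le> n \<Longrightarrow> X j \<in> borel_measurable (F n)"
  by (rule measurable_from_subalg[OF _ adapted])
     (simp add: subalgebra_def space_F filt_mono)

lemma measurable_X [measurable]: "X n \<in> borel_measurable M"
  using measurable_from_subalg[OF subalg adapted] .

lemma sigma_finite_subalgebra_F: "sigma_finite_subalgebra M (F n)"
  by (rule finite_measure_subalgebra_is_sigma_finite)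
     (simp add: finite_measure_subalgebra_def finite_measure_subalgebra_axioms_def
        subalg finite_measure_axioms)

lemma integral_indicator_mult_nonpos:
  assumes A: "A \<in> sets (F n)" and g: "integrable M g"
    and ce: "AE \<omega> in M. \<omega> \<in> A \<longrightarrow> real_cond_exp M (F n) g \<omega> \<le> 0"
  shows "(\<integral>\<omega>. indicator A \<omega> * g \<omega> \<partial>M) \<le> 0"
proof -
  interpret sigma_finite_subalgebra M "F n" by (rule sigma_finite_subalgebra_F)
  have "(\<integral>\<omega>. indicator A \<omega> * g \<omega> \<partial>M) = (\<integral>\<omega>\<in>A. real_cond_exp M (F n) g \<omega> \<partial>M)"
    using real_cond_exp_intA[OF g A] by (simp add: set_lebesgue_integral_def)
  also have "\<dots> \<le> 0"
  proof -
    have "0 \<le> (\<integral>\<omega>. - (indicator A \<omega> * real_cond_exp M (F n) g \<omega>) \<partial>M)"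
      using ce by (intro integral_nonneg_AE) (auto simp: indicator_def elim!: eventually_mono)
    then show ?thesis by (simp add: set_lebesgue_integral_def)
  qed
  finally show ?thesis .
qed

definition crossed_above :: "real \<Rightarrow> nat \<Rightarrow> 'a set" where
  "crossed_above b n = {\<omega>\<in>space M. \<exists>j\<le>n. b < X j \<omega>}"

definition returned_below :: "real \<Rightarrow> real \<Rightarrow> nat \<Rightarrow> 'a set" where
  "returned_below b K n = {\<omega>\<in>space M. \<exists>j i. j < i \<and> i \<le> n \<and> b < X j \<omega> \<and> X i \<omega> \<le> K}"

lemma crossed_above_in_F: "crossed_above b n \<in> sets (F n)"
proof -
  have "crossed_above b n = (\<Union>j\<le>n. {\<omega>\<in>space (F n). b < X j \<omega>})"
    by (auto simp: crossed_above_def space_F)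
  also have "\<dots> \<in> sets (F n)"
  proof (intro sets.finite_UN)
    fix j assume "j \<in> {..n}"
    then have [measurable]: "X j \<in> borel_measurable (F n)" by (simp add: adapted_le)
    show "{\<omega>\<in>space (F n). b < X j \<omega>} \<in> sets (F n)" by measurable
  qed auto
  finally show ?thesis .
qed

lemma returned_below_in_F: "returned_below b K n \<in> sets (F n)"
proof -
  have "returned_below b K n = (\<Union>i\<le>n. \<Union>j<i. {\<omega>\<in>space (F n). b < X j \<omega> \<and> X i \<omega> \<le> K})"
    by (auto simp: returned_below_def space_F)
  also have "\<dots> \<in> sets (F n)"
  proof (intro sets.finite_UN)
    fix i j assume "i \<in> {..n}" "j \<in> {..<i}"
    then have [measurable]: "X j \<in> borel_measurable (F n)" "X i \<in> borel_measurable (F n)"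
      by (simp_all add: adapted_le)
    show "{\<omega>\<in>space (F n). b < X j \<omega> \<and> X i \<omega> \<le> K} \<in> sets (F n)" by measurable
  qed auto
  finally show ?thesis .
qed

lemma crossed_above_sets [measurable]: "crossed_above b n \<in> sets M"
  and returned_below_sets [measurable]: "returned_below b K n \<in> sets M"
  using crossed_above_in_F returned_below_in_F sets_F_subset by blast+

lemma returned_below_0: "returned_below b K 0 = {}"
  by (auto simp: returned_below_def)

lemma crossed_above_Suc:
  "crossed_above b (Suc n) = crossed_above b n \<union> {\<omega>\<in>space M. b < X (Suc n) \<omega>}"
  by (auto simp: crossed_above_def le_Suc_eq)

lemma returned_below_Suc:
  "returned_below b K (Suc n) = returned_below b K n \<union> {\<omega>\<in>crossed_above b n. X (Suc n) \<omega> \<le> K}"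
  by (auto simp: returned_below_def crossed_above_def le_Suc_eq less_Suc_eq_le)
     (metis le_SucE less_Suc_eq_le)

lemma returned_below_subset: "returned_below b K n \<subseteq> crossed_above b n"
  by (auto simp: returned_below_def crossed_above_def intro: less_imp_le order_trans)

lemma above_if_crossed_not_returned:
  assumes "K < b" "\<omega> \<in> crossed_above b n - returned_below b K n"
  shows "K < X n \<omega>"
proof (rule ccontr)
  assume "\<not> K < X n \<omega>"
  moreover obtain j where "j \<le> n" "b < X j \<omega>" "\<omega> \<in> space M"
    using assms(2) by (auto simp: crossed_above_def)
  moreover from calculation have "j < n" using assms(1) by (auto simp: le_less)
  ultimately have "\<omega> \<in> returned_below b K n"
    unfolding returned_below_def not_less by blast
  then show False using assms(2) by blast
qed

lemma incseq_returned_below: "incseq (returned_below b K)"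
  by (force simp: incseq_def returned_below_def)

lemma UN_returned_below:
  "(\<Union>n. returned_below b K n) = {\<omega>\<in>space M. \<exists>j i. j < i \<and> b < X j \<omega> \<and> X i \<omega> \<le> K}"
  by (auto simp: returned_below_def)

end

locale lyapunov_drift = adapted_real_process +
  fixes f :: "real \<Rightarrow> real" and x1 :: real
  assumes f_meas: "f \<in> borel_measurable borel"
    and f_nonneg: "\<And>x. 0 \<le> f x"
    and f_bdd: "bdd_above (range f)"
    and f_tendsto_0: "(f \<longlongrightarrow> 0) at_top"
    and drift: "\<And>n. AE \<omega> in M. x1 < X n \<omega> \<longrightarrow>
      real_cond_exp M (F n) (\<lambda>\<omega>. f (X (Suc n) \<omega>) - f (X n \<omega>)) \<omega> \<le> 0"
begin

declare f_meas [measurable]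

lemma f_le_Sup: "f x \<le> Sup (range f)"
  using f_bdd by (rule cSUP_upper[OF UNIV_I])

lemma Sup_f_nonneg: "0 \<le> Sup (range f)"
  using order_trans[OF f_nonneg f_le_Sup] .

lemma f_small_beyond: "0 < \<epsilon> \<Longrightarrow> \<exists>b>K. \<forall>y>b. f y \<le> \<epsilon>"
proof -
  assume "0 < \<epsilon>"
  then obtain N where N: "\<And>y. N \<le> y \<Longrightarrow> f y < \<epsilon>"
    using order_tendstoD(2)[OF f_tendsto_0] by (auto simp: eventually_at_top_linorder)
  show ?thesis
    by (rule exI[of _ "max N (K + 1)"]) (auto intro: less_imp_le N)
qed

context
  fixes K b \<delta> \<epsilon> :: real
  assumes x1_le_K: "x1 \<le> K" and K_less_b: "K < b" and \<delta>_pos: "0 < \<delta>"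
    and f_ge_\<delta>: "\<And>y. y \<le> K \<Longrightarrow> \<delta> \<le> f y" and f_le_\<epsilon>: "\<And>y. b < y \<Longrightarrow> f y \<le> \<epsilon>"
begin

lemma \<epsilon>_nonneg: "0 \<le> \<epsilon>"
  using f_le_\<epsilon>[of "b + 1"] f_nonneg[of "b + 1"] by simp

text \<open>A supermartingale: it is \<open>f (X n) - \<epsilon>\<close> once \<open>X\<close> has exceeded \<open>b\<close> but not yet come back
  to \<open>{..K}\<close>, it is frozen at \<open>\<delta> - \<epsilon>\<close> after the return, and it is \<open>0\<close> before \<open>b\<close> is exceeded.\<close>

definition potential :: "nat \<Rightarrow> 'a \<Rightarrow> real" where
  "potential n \<omega> = f (X n \<omega>) * indicator (crossed_above b n - returned_below b K n) \<omega>
     + \<delta> * indicator (returned_below b K n) \<omega> - \<epsilon> * indicator (crossed_above b n) \<omega>"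

lemma potential_measurable [measurable]: "potential n \<in> borel_measurable M"
  unfolding potential_def by measurable

lemma integrable_potential: "integrable M (potential n)"
proof (rule integrable_bounded)
  fix \<omega>
  show "\<bar>potential n \<omega>\<bar> \<le> Sup (range f) + \<delta> + \<epsilon>"
    using f_nonneg[of "X n \<omega>"] f_le_Sup[of "X n \<omega>"] Sup_f_nonneg \<delta>_pos \<epsilon>_nonneg
    by (auto simp: potential_def indicator_def)
qed simp

lemma potential_0_nonpos: "potential 0 \<omega> \<le> 0"
  using f_le_\<epsilon> by (auto simp: potential_def indicator_def returned_below_0 crossed_above_def)

lemma potential_Suc_le:
  "potential (Suc n) \<omega> \<le> potential n \<omega> +
     indicator (crossed_above b n - returned_below b K n) \<omega> * (f (X (Suc n) \<omega>) - f (X n \<omega>))"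
  using returned_below_subset[of b K n] f_ge_\<delta>[of "X (Suc n) \<omega>"] f_le_\<epsilon>[of "X (Suc n) \<omega>"]
    f_nonneg \<delta>_pos K_less_b
  by (cases "\<omega> \<in> crossed_above b n"; cases "\<omega> \<in> returned_below b K n";
      cases "X (Suc n) \<omega> \<le> K"; cases "b < X (Suc n) \<omega>")
     (auto simp: potential_def indicator_def crossed_above_Suc returned_below_Suc)

lemma integral_potential_Suc_le:
  "integral\<^sup>L M (potential (Suc n)) \<le> integral\<^sup>L M (potential n)"
proof -
  let ?L = "crossed_above b n - returned_below b K n"
  let ?g = "\<lambda>\<omega>. f (X (Suc n) \<omega>) - f (X n \<omega>)"
  have L_in_F: "?L \<in> sets (F n)"
    using crossed_above_in_F returned_below_in_F by blast
  have g_int: "integrable M ?g"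
  proof (rule integrable_bounded)
    fix \<omega>
    show "\<bar>?g \<omega>\<bar> \<le> Sup (range f)"
      using f_nonneg[of "X n \<omega>"] f_le_Sup[of "X n \<omega>"]
        f_nonneg[of "X (Suc n) \<omega>"] f_le_Sup[of "X (Suc n) \<omega>"]
      unfolding abs_le_iff by linarith
  qed simp
  then have Lg_int: "integrable M (\<lambda>\<omega>. indicator ?L \<omega> * ?g \<omega>)"
    using integrable_mult_indicator[of ?L M ?g] L_in_F sets_F_subset g_int by auto
  have "x1 < X n \<omega>" if "\<omega> \<in> ?L" for \<omega>
    using above_if_crossed_not_returned[OF K_less_b that] x1_le_K by linarith
  then have "AE \<omega> in M. \<omega> \<in> ?L \<longrightarrow> real_cond_exp M (F n) ?g \<omega> \<le> 0"
    using drift[of n] by (auto elim!: eventually_mono)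
  then have Lg_nonpos: "(\<integral>\<omega>. indicator ?L \<omega> * ?g \<omega> \<partial>M) \<le> 0"
    by (rule integral_indicator_mult_nonpos[OF L_in_F g_int])
  have "integral\<^sup>L M (potential (Suc n)) \<le> (\<integral>\<omega>. potential n \<omega> + indicator ?L \<omega> * ?g \<omega> \<partial>M)"
    using integrable_potential Lg_int potential_Suc_le by (intro integral_mono) auto
  also have "\<dots> = integral\<^sup>L M (potential n) + (\<integral>\<omega>. indicator ?L \<omega> * ?g \<omega> \<partial>M)"
    using integrable_potential Lg_int by (rule Bochner_Integration.integral_add)
  finally show ?thesis using Lg_nonpos by linarith
qed

lemma integral_potential_nonpos: "integral\<^sup>L M (potential n) \<le> 0"
proof (induction n)
  case 0
  have "integral\<^sup>L M (potential 0) \<le> integral\<^sup>L M (\<lambda>_. 0)"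
    using potential_0_nonpos by (intro integral_mono integrable_potential) auto
  then show ?case by simp
next
  case (Suc n)
  then show ?case using integral_potential_Suc_le[of n] by linarith
qed

lemma measure_returned_below_le: "measure M (returned_below b K n) \<le> \<epsilon> / \<delta>"
proof -
  have ind_int: "integrable M (indicator (returned_below b K n) :: 'a \<Rightarrow> real)"
    by (rule integrable_bounded[where C = 1]) (auto simp: indicator_def)
  then have lower_int: "integrable M (\<lambda>\<omega>. \<delta> * indicator (returned_below b K n) \<omega> - \<epsilon>)"
    by (intro Bochner_Integration.integrable_diff integrable_mult_right) auto
  have "\<delta> * measure M (returned_below b K n) - \<epsilon> = (\<integral>\<omega>. \<delta> * indicator (returned_below b K n) \<omega> - \<epsilon> \<partial>M)"
    using ind_int by (simp add: Bochner_Integration.integral_diff prob_space)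
  also have "\<dots> \<le> integral\<^sup>L M (potential n)"
    using lower_int integrable_potential f_nonneg \<epsilon>_nonneg
    by (intro integral_mono) (auto simp: potential_def indicator_def intro: order_trans[OF _ f_nonneg])
  finally have "\<delta> * measure M (returned_below b K n) \<le> \<epsilon>"
    using integral_potential_nonpos[of n] by linarith
  then show ?thesis using \<delta>_pos by (simp add: field_simps mult.commute)
qed

lemma measure_eventually_returned_le:
  "measure M {\<omega>\<in>space M. \<exists>j i. j < i \<and> b < X j \<omega> \<and> X i \<omega> \<le> K} \<le> \<epsilon> / \<delta>"
proof -
  have "(\<lambda>n. measure M (returned_below b K n)) \<longlonglongrightarrow> measure M (\<Union>n. returned_below b K n)"
    using incseq_returned_below by (intro finite_Lim_measure_incseq) auto
  then have "measure M (\<Union>n. returned_below b K n) \<le> \<epsilon> / \<delta>"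
    by (rule LIMSEQ_le_const2) (simp add: measure_returned_below_le)
  then show ?thesis by (simp add: UN_returned_below)
qed

end

lemma AE_eventually_above_if_unbounded:
  assumes x1_le_K: "x1 \<le> K" and \<delta>_pos: "0 < \<delta>" and f_ge_\<delta>: "\<And>y. y \<le> K \<Longrightarrow> \<delta> \<le> f y"
  shows "AE \<omega> in M. \<not> bdd_above (range (\<lambda>n. X n \<omega>)) \<longrightarrow> (\<forall>\<^sub>F n in sequentially. K < X n \<omega>)"
proof -
  have "\<forall>m. \<exists>b>K. \<forall>y>b. f y \<le> inverse (real (Suc m))"
    using f_small_beyond by simp
  then obtain b where K_less_b: "\<And>m. K < b m"
    and f_le: "\<And>m y. b m < y \<Longrightarrow> f y \<le> inverse (real (Suc m))"
    by metis
  define R where "R m = {\<omega>\<in>space M. \<exists>j i. j < i \<and> b m < X j \<omega> \<and> X i \<omega> \<le> K}" for m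
  have "(\<Inter>m. R m) \<in> null_sets M"
  proof (rule INT_in_null_sets)
    show "R m \<in> sets M" for m
      unfolding R_def UN_returned_below[symmetric] by measurable
    show "measure M (R m) \<le> inverse (real (Suc m)) / \<delta>" for m
      unfolding R_def using x1_le_K K_less_b \<delta>_pos f_ge_\<delta> f_le
      by (rule measure_eventually_returned_le)
    show "(\<lambda>m. inverse (real (Suc m)) / \<delta>) \<longlonglongrightarrow> 0"
      by (intro tendsto_divide_zero LIMSEQ_inverse_real_of_nat)
  qed
  then show ?thesis
  proof (rule AE_I', intro subsetI INT_I)
    fix \<omega> m assume "\<omega> \<in> {\<omega>\<in>space M. \<not> (\<not> bdd_above (range (\<lambda>n. X n \<omega>)) \<longrightarrow>
        (\<forall>\<^sub>F n in sequentially. K < X n \<omega>))}"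
    then have \<omega>: "\<omega> \<in> space M" and unbounded: "\<not> bdd_above (range (\<lambda>n. X n \<omega>))"
      and not_above: "\<not> (\<forall>\<^sub>F n in sequentially. K < X n \<omega>)"
      by auto
    obtain j where j: "b m < X j \<omega>"
      using unbounded by (auto simp: bdd_above_def not_le)
    obtain i where "Suc j \<le> i" "X i \<omega> \<le> K"
      using not_above by (auto simp: eventually_sequentially not_less)
    then show "\<omega> \<in> R m"
      using \<omega> j by (auto simp: R_def Suc_le_eq)
  qed
qed

lemma AE_filterlim_at_top_if_unbounded:
  assumes lower: "\<And>K. \<exists>\<delta>>0. \<forall>y\<le>K. \<delta> \<le> f y"
  shows "AE \<omega> in M. \<not> bdd_above (range (\<lambda>n. X n \<omega>)) \<longrightarrow> filterlim (\<lambda>n. X n \<omega>) at_top sequentially"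
proof -
  have "AE \<omega> in M. \<forall>k::nat. \<not> bdd_above (range (\<lambda>n. X n \<omega>)) \<longrightarrow>
      (\<forall>\<^sub>F n in sequentially. x1 + real k < X n \<omega>)"
  proof (unfold AE_all_countable, rule allI)
    fix k
    obtain \<delta> where "0 < \<delta>" "\<And>y. y \<le> x1 + real k \<Longrightarrow> \<delta> \<le> f y"
      using lower by blast
    then show "AE \<omega> in M. \<not> bdd_above (range (\<lambda>n. X n \<omega>)) \<longrightarrow>
        (\<forall>\<^sub>F n in sequentially. x1 + real k < X n \<omega>)"
      by (intro AE_eventually_above_if_unbounded) auto
  qed
  then show ?thesis
  proof (rule AE_mp, intro AE_I2 impI)
    fix \<omega> assume all_k: "\<forall>k::nat. \<not> bdd_above (range (\<lambda>n. X n \<omega>)) \<longrightarrow>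
        (\<forall>\<^sub>F n in sequentially. x1 + real k < X n \<omega>)"
      and unbounded: "\<not> bdd_above (range (\<lambda>n. X n \<omega>))"
    have above: "\<forall>\<^sub>F n in sequentially. x1 + real k < X n \<omega>" for k
      using all_k unbounded by simp
    show "filterlim (\<lambda>n. X n \<omega>) at_top sequentially"
    proof (unfold filterlim_at_top, rule allI)
      fix Z
      obtain k where "Z - x1 \<le> real k" using real_arch_simple by blast
      then show "\<forall>\<^sub>F n in sequentially. Z \<le> X n \<omega>"
        using above[of k] by (auto elim!: eventually_mono)
    qed
  qed
qed

end

theorem lemma3p5:
  fixes M :: "'a measure" and F :: "nat \<Rightarrow> 'a measure"
    and X :: "nat \<Rightarrow> 'a \<Rightarrow> real" and f :: "real \<Rightarrow> real" and x1 :: real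
  assumes prob: "prob_space M"
    and subalg: "\<And>n. subalgebra M (F n)"
    and filt_mono: "\<And>n m. n \<le> m \<Longrightarrow> sets (F n) \<subseteq> sets (F m)"
    and adapted: "\<And>n. X n \<in> borel_measurable (F n)"
    and limsup_inf: "AE \<omega> in M. limsup (\<lambda>n. ereal \<bar>X n \<omega>\<bar>) = \<infinity>"
    and f_meas: "f \<in> borel_measurable borel"
    and f_nonneg: "\<And>x. f x \<ge> 0"
    and f_bdd: "bdd_above (range f)"
    and f_lim: "(f \<longlongrightarrow> 0) at_top"
    and f_inf_pos: "\<And>x. x \<ge> 0 \<Longrightarrow> Inf (f ` {..x}) > 0"
    and x1_nonneg: "x1 \<ge> 0"
    and drift_pos: "\<And>n. AE \<omega> in M. X n \<omega> > x1 \<longrightarrow>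
        real_cond_exp M (F n) (\<lambda>\<omega>. f (X (Suc n) \<omega>) - f (X n \<omega>)) \<omega> \<le> 0"
    and drift_neg: "\<And>n. AE \<omega> in M. X n \<omega> < - x1 \<longrightarrow>
        real_cond_exp M (F n) (\<lambda>\<omega>. f (- X (Suc n) \<omega>) - f (- X n \<omega>)) \<omega> \<le> 0"
  shows "AE \<omega> in M. filterlim (\<lambda>n. X n \<omega>) at_top sequentially
                   \<or> filterlim (\<lambda>n. X n \<omega>) at_bot sequentially"
proof -
  interpret pos: lyapunov_drift M F X f x1
    using prob subalg filt_mono adapted f_meas f_nonneg f_bdd f_lim drift_pos
    by (intro lyapunov_drift.intro adapted_real_process.intro adapted_real_process_axioms.intro
        lyapunov_drift_axioms.intro) auto
  interpret neg: lyapunov_drift M F "\<lambda>n \<omega>. - X n \<omega>" f x1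
    using prob subalg filt_mono adapted f_meas f_nonneg f_bdd f_lim drift_neg
    by (intro lyapunov_drift.intro adapted_real_process.intro adapted_real_process_axioms.intro
        lyapunov_drift_axioms.intro) (auto simp: less_minus_iff)
  have lower: "\<exists>\<delta>>0. \<forall>y\<le>K. \<delta> \<le> f y" for K
  proof (intro exI conjI allI impI)
    show "0 < Inf (f ` {..max K 0})"
      by (rule f_inf_pos) simp
    show "Inf (f ` {..max K 0}) \<le> f y" if "y \<le> K" for y
      using that f_nonneg by (intro cInf_lower bdd_belowI2[where m = 0]) auto
  qed
  show ?thesis
    using pos.AE_filterlim_at_top_if_unbounded[OF lower]
      neg.AE_filterlim_at_top_if_unbounded[OF lower] limsup_inf
    by eventually_elim
       (auto dest!: unbounded_if_limsup_abs_infinite simp: bdd_above_uminus_image filterlim_uminus_at_top)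
qed

end
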